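(* Let $A$ be a differential ring, $X=\operatorname{Spec}^\Delta A$, and let $D$ be a differential subring of $\mathcal O'(X)$ containing $\iota'(A)$. Let $\iota'\colon A\to D$ denote the corresponding homomorphism. Then $\iota'^*\colon\operatorname{Spec}^\Delta D\to\operatorname{Spec}^\Delta A$, $\mathfrak q\mapsto\iota'^{-1}(\mathfrak q)$, is a homeomorphism.
   Context: All rings are commutative with unit. A differential ring is a ring with finitely many pairwise commuting derivations. $\operatorname{Spec}^\Delta R$ is the set of prime ideals of a differential ring $R$ closed under all derivations, with the Kolchin topology (closed sets $V(E)=\{\mathfrak p: E\subseteq\mathfrak p\}$). For $\mathfrak p\in X$, $K(\mathfrak p)$ is the fraction field of $A/\mathfrak p$ with the induced derivations. For an open $U\subseteq X$, $\mathcal O'(U)$ is the set of functions $f$ on $U$ with $f(\mathfrak p)\in K(\mathfrak p)$ that are regular at every point of $U$, where $f$ is regular at $\mathfrak p$ if there exist an open neighborhood $W\subseteq U$ of $\mathfrak p$ and $a,b\in A$ with $b\notin\mathfrak q$ and $f(\mathfrak q)=a/b$ in $K(\mathfrak q)$ for all $\mathfrak q\in W$. With pointwise operations and pointwise derivations, $\mathcal O'(U)$ is a differential ring. The differential homomorphism $\iota'\colon A\to\mathcal O'(X)$ sends $a$ to the function $\mathfrak p\mapsto (a\bmod\mathfrak p)\in K(\mathfrak p)$. *)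

theory Defs
  imports "HOL-Algebra.Algebra" "HOL-Analysis.Abstract_Topology"
begin

definition is_derivation :: "('a, 'm) ring_scheme \<Rightarrow> ('a \<Rightarrow> 'a) \<Rightarrow> bool" where
  "is_derivation R d \<longleftrightarrow> d \<in> carrier R \<rightarrow> carrier R \<and>
     (\<forall>x\<in>carrier R. \<forall>y\<in>carrier R.
        d (x \<oplus>\<^bsub>R\<^esub> y) = d x \<oplus>\<^bsub>R\<^esub> d y \<and>
        d (x \<otimes>\<^bsub>R\<^esub> y) = (d x \<otimes>\<^bsub>R\<^esub> y) \<oplus>\<^bsub>R\<^esub> (x \<otimes>\<^bsub>R\<^esub> d y))"

definition diff_ring :: "('a, 'm) ring_scheme \<Rightarrow> 'i set \<Rightarrow> ('i \<Rightarrow> 'a \<Rightarrow> 'a) \<Rightarrow> bool" where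
  "diff_ring R I \<delta> \<longleftrightarrow> cring R \<and> finite I \<and> (\<forall>i\<in>I. is_derivation R (\<delta> i)) \<and>
     (\<forall>i\<in>I. \<forall>j\<in>I. \<forall>x\<in>carrier R. \<delta> i (\<delta> j x) = \<delta> j (\<delta> i x))"

definition diff_spec :: "('a, 'm) ring_scheme \<Rightarrow> 'i set \<Rightarrow> ('i \<Rightarrow> 'a \<Rightarrow> 'a) \<Rightarrow> 'a set set" where
  "diff_spec R I \<delta> = {P. primeideal P R \<and> (\<forall>i\<in>I. \<forall>x\<in>P. \<delta> i x \<in> P)}"

definition kolchin_V :: "('a, 'm) ring_scheme \<Rightarrow> 'i set \<Rightarrow> ('i \<Rightarrow> 'a \<Rightarrow> 'a) \<Rightarrow> 'a set \<Rightarrow> 'a set set" where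
  "kolchin_V R I \<delta> E = {P \<in> diff_spec R I \<delta>. E \<subseteq> P}"

definition kolchin_topology :: "('a, 'm) ring_scheme \<Rightarrow> 'i set \<Rightarrow> ('i \<Rightarrow> 'a \<Rightarrow> 'a) \<Rightarrow> 'a set topology" where
  "kolchin_topology R I \<delta> =
     topology (\<lambda>U. \<exists>E. E \<subseteq> carrier R \<and> U = diff_spec R I \<delta> - kolchin_V R I \<delta> E)"

section \<open>The fraction field K(p) of R/p, as classes of pairs (a,b), b not in p\<close>

definition frac_rel :: "('a, 'm) ring_scheme \<Rightarrow> 'a set \<Rightarrow> (('a \<times> 'a) \<times> ('a \<times> 'a)) set" where
  "frac_rel R p = {((a, b), (c, d)). a \<in> carrier R \<and> b \<in> carrier R - p \<and>
      c \<in> carrier R \<and> d \<in> carrier R - p \<and> (a \<otimes>\<^bsub>R\<^esub> d) \<ominus>\<^bsub>R\<^esub> (c \<otimes>\<^bsub>R\<^esub> b) \<in> p}"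

definition frac :: "('a, 'm) ring_scheme \<Rightarrow> 'a set \<Rightarrow> 'a \<Rightarrow> 'a \<Rightarrow> ('a \<times> 'a) set" where
  "frac R p a b = frac_rel R p `` {(a, b)}"

definition frac_field_carrier :: "('a, 'm) ring_scheme \<Rightarrow> 'a set \<Rightarrow> ('a \<times> 'a) set set" where
  "frac_field_carrier R p = {frac R p a b | a b. a \<in> carrier R \<and> b \<in> carrier R - p}"

definition frac_rep :: "('a \<times> 'a) set \<Rightarrow> 'a \<times> 'a" where
  "frac_rep x = (SOME ab. ab \<in> x)"

definition frac_add :: "('a, 'm) ring_scheme \<Rightarrow> 'a set \<Rightarrow> ('a \<times> 'a) set \<Rightarrow> ('a \<times> 'a) set \<Rightarrow> ('a \<times> 'a) set" where
  "frac_add R p x y = (case frac_rep x of (a, b) \<Rightarrow> case frac_rep y of (c, d) \<Rightarrow>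
      frac R p ((a \<otimes>\<^bsub>R\<^esub> d) \<oplus>\<^bsub>R\<^esub> (c \<otimes>\<^bsub>R\<^esub> b)) (b \<otimes>\<^bsub>R\<^esub> d))"

definition frac_mul :: "('a, 'm) ring_scheme \<Rightarrow> 'a set \<Rightarrow> ('a \<times> 'a) set \<Rightarrow> ('a \<times> 'a) set \<Rightarrow> ('a \<times> 'a) set" where
  "frac_mul R p x y = (case frac_rep x of (a, b) \<Rightarrow> case frac_rep y of (c, d) \<Rightarrow>
      frac R p (a \<otimes>\<^bsub>R\<^esub> c) (b \<otimes>\<^bsub>R\<^esub> d))"

definition frac_der :: "('a, 'm) ring_scheme \<Rightarrow> 'a set \<Rightarrow> ('a \<Rightarrow> 'a) \<Rightarrow> ('a \<times> 'a) set \<Rightarrow> ('a \<times> 'a) set" where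
  "frac_der R p d x = (case frac_rep x of (a, b) \<Rightarrow>
      frac R p ((d a \<otimes>\<^bsub>R\<^esub> b) \<ominus>\<^bsub>R\<^esub> (a \<otimes>\<^bsub>R\<^esub> d b)) (b \<otimes>\<^bsub>R\<^esub> b))"

text \<open>Functions are extensional: value undefined outside the domain U.\<close>
definition regular_at :: "('a, 'm) ring_scheme \<Rightarrow> 'i set \<Rightarrow> ('i \<Rightarrow> 'a \<Rightarrow> 'a) \<Rightarrow> 'a set set
    \<Rightarrow> ('a set \<Rightarrow> ('a \<times> 'a) set) \<Rightarrow> 'a set \<Rightarrow> bool" where
  "regular_at R I \<delta> U f P \<longleftrightarrow> (\<exists>W a b. openin (kolchin_topology R I \<delta>) W \<and> P \<in> W \<and> W \<subseteq> U \<and>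
      a \<in> carrier R \<and> b \<in> carrier R \<and> (\<forall>Q\<in>W. b \<notin> Q \<and> f Q = frac R Q a b))"

definition O_sections :: "('a, 'm) ring_scheme \<Rightarrow> 'i set \<Rightarrow> ('i \<Rightarrow> 'a \<Rightarrow> 'a) \<Rightarrow> 'a set set
    \<Rightarrow> ('a set \<Rightarrow> ('a \<times> 'a) set) set" where
  "O_sections R I \<delta> U = {f. (\<forall>P\<in>U. f P \<in> frac_field_carrier R P \<and> regular_at R I \<delta> U f P) \<and>
      (\<forall>P. P \<notin> U \<longrightarrow> f P = undefined)}"

definition O_ring :: "('a, 'm) ring_scheme \<Rightarrow> 'i set \<Rightarrow> ('i \<Rightarrow> 'a \<Rightarrow> 'a) \<Rightarrow> ('a set \<Rightarrow> ('a \<times> 'a) set) ring" where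
  "O_ring R I \<delta> =
     \<lparr>carrier = O_sections R I \<delta> (diff_spec R I \<delta>),
      monoid.mult = (\<lambda>f g P. if P \<in> diff_spec R I \<delta> then frac_mul R P (f P) (g P) else undefined),
      monoid.one = (\<lambda>P. if P \<in> diff_spec R I \<delta> then frac R P \<one>\<^bsub>R\<^esub> \<one>\<^bsub>R\<^esub> else undefined),
      ring.zero = (\<lambda>P. if P \<in> diff_spec R I \<delta> then frac R P \<zero>\<^bsub>R\<^esub> \<one>\<^bsub>R\<^esub> else undefined),
      ring.add = (\<lambda>f g P. if P \<in> diff_spec R I \<delta> then frac_add R P (f P) (g P) else undefined)\<rparr>"

definition O_der :: "('a, 'm) ring_scheme \<Rightarrow> 'i set \<Rightarrow> ('i \<Rightarrow> 'a \<Rightarrow> 'a) \<Rightarrow> 'i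
    \<Rightarrow> ('a set \<Rightarrow> ('a \<times> 'a) set) \<Rightarrow> ('a set \<Rightarrow> ('a \<times> 'a) set)" where
  "O_der R I \<delta> i f = (\<lambda>P. if P \<in> diff_spec R I \<delta> then frac_der R P (\<delta> i) (f P) else undefined)"

definition iota' :: "('a, 'm) ring_scheme \<Rightarrow> 'i set \<Rightarrow> ('i \<Rightarrow> 'a \<Rightarrow> 'a) \<Rightarrow> 'a \<Rightarrow> ('a set \<Rightarrow> ('a \<times> 'a) set)" where
  "iota' R I \<delta> a = (\<lambda>P. if P \<in> diff_spec R I \<delta> then frac R P a \<one>\<^bsub>R\<^esub> else undefined)"

end

theory Submission
  imports Defs
begin

(* The inverse sends a differential prime p of A to the set of f \<in> D vanishing at p, the kernel
   of evaluation D -> K(p).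
   In the setting of the theorem, contraction and vanishing map differential primes to
   differential primes (iota' and evaluation are differential homomorphisms), and contraction
   after vanishing is the identity.  The heart of the argument is the converse composite: if
   f = a/b on D(e) around p, then iota'(e b) f = iota'(e a) on all of X, so f lies in a
   differential prime Q of D iff e a lies in its contraction, iff f vanishes there.  Finally
   both maps are continuous: contraction pulls V(E) back to V(iota'(E)), and the non-vanishing
   locus of f \<in> D is open, being covered by basic opens D(e a). *)

context cring
begin

lemma derivation_closed: "is_derivation R d \<Longrightarrow> x \<in> carrier R \<Longrightarrow> d x \<in> carrier R"
  unfolding is_derivation_def by blast

lemma derivation_add:
  "is_derivation R d \<Longrightarrow> x \<in> carrier R \<Longrightarrow> y \<in> carrier R \<Longrightarrow> d (x \<oplus> y) = d x \<oplus> d y"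
  unfolding is_derivation_def by blast

lemma derivation_mult:
  "is_derivation R d \<Longrightarrow> x \<in> carrier R \<Longrightarrow> y \<in> carrier R \<Longrightarrow> d (x \<otimes> y) = d x \<otimes> y \<oplus> x \<otimes> d y"
  unfolding is_derivation_def by blast

lemma derivation_one:
  assumes "is_derivation R d" shows "d \<one> = \<zero>"
proof -
  have c: "d \<one> \<in> carrier R" using derivation_closed[OF assms] by simp
  have "d \<one> \<oplus> d \<one> = d \<one> \<oplus> \<zero>" using derivation_mult[OF assms, of \<one> \<one>] c by simp
  thus ?thesis using c by simp
qed

lemma derivation_minus:
  assumes d: "is_derivation R d" and x: "x \<in> carrier R" and y: "y \<in> carrier R"
  shows "d (x \<ominus> y) = d x \<ominus> d y"
proof -
  have c: "d x \<in> carrier R" "d y \<in> carrier R" "d (x \<ominus> y) \<in> carrier R"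
    using derivation_closed[OF d] x y by auto
  have "x \<ominus> y \<oplus> y = x" using x y by algebra
  hence "d (x \<ominus> y) \<oplus> d y = d x"
    using derivation_add[OF d, of "x \<ominus> y" y] x y by simp
  thus ?thesis using c by (metis add.inv_solve_right minus_eq)
qed

end

section \<open>The fraction field of A/p\<close>

lemma (in ideal) ideal_lincomb:
  "u \<in> I \<Longrightarrow> v \<in> I \<Longrightarrow> s \<in> carrier R \<Longrightarrow> t \<in> carrier R \<Longrightarrow> s \<otimes> u \<oplus> t \<otimes> v \<in> I"
  by (meson I_l_closed additive_subgroup.a_closed additive_subgroup_axioms)

definition frac_field :: "('a, 'm) ring_scheme \<Rightarrow> 'a set \<Rightarrow> ('a \<times> 'a) set ring" where
  "frac_field R P = \<lparr>carrier = frac_field_carrier R P, monoid.mult = frac_mul R P,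
     monoid.one = frac R P \<one>\<^bsub>R\<^esub> \<one>\<^bsub>R\<^esub>, ring.zero = frac R P \<zero>\<^bsub>R\<^esub> \<one>\<^bsub>R\<^esub>,
     ring.add = frac_add R P\<rparr>"

lemma frac_field_simps:
  "carrier (frac_field R P) = frac_field_carrier R P"
  "x \<oplus>\<^bsub>frac_field R P\<^esub> y = frac_add R P x y"
  "x \<otimes>\<^bsub>frac_field R P\<^esub> y = frac_mul R P x y"
  "\<one>\<^bsub>frac_field R P\<^esub> = frac R P \<one>\<^bsub>R\<^esub> \<one>\<^bsub>R\<^esub>"
  "\<zero>\<^bsub>frac_field R P\<^esub> = frac R P \<zero>\<^bsub>R\<^esub> \<one>\<^bsub>R\<^esub>"
  by (simp_all add: frac_field_def)

context primeideal
begin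

lemma prime_mult_iff [simp]:
  "b \<in> carrier R \<Longrightarrow> d \<in> carrier R \<Longrightarrow> b \<otimes> d \<in> I \<longleftrightarrow> b \<in> I \<or> d \<in> I"
  using I_prime I_l_closed I_r_closed by blast

lemma one_not_in [simp]: "\<one> \<notin> I"
  using I_notcarr one_imp_carrier by blast

text \<open>Cross-multiplication modulo I is an equivalence relation on fractions with
  denominators outside I; this is where primality of I is used.\<close>
lemma frac_rel_equiv: "equiv (carrier R \<times> (carrier R - I)) (frac_rel R I)"
proof (rule equivI)
  show "refl_on (carrier R \<times> (carrier R - I)) (frac_rel R I)"
    unfolding refl_on_def frac_rel_def by (auto simp: r_neg minus_eq)
  show "sym (frac_rel R I)"
  proof (rule symI)
    fix x y assume "(x, y) \<in> frac_rel R I"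
    then obtain a b c d where xy: "x = (a, b)" "y = (c, d)" and c: "a \<in> carrier R" "b \<in> carrier R"
      "c \<in> carrier R" "d \<in> carrier R" "b \<notin> I" "d \<notin> I" and u: "a \<otimes> d \<ominus> c \<otimes> b \<in> I"
      unfolding frac_rel_def by auto
    have "c \<otimes> b \<ominus> a \<otimes> d = \<ominus> (a \<otimes> d \<ominus> c \<otimes> b)" using c by algebra
    thus "(y, x) \<in> frac_rel R I" using u c unfolding xy frac_rel_def by (simp add: a_inv_closed)
  qed
  show "trans (frac_rel R I)"
  proof (rule transI)
    fix x y z assume "(x, y) \<in> frac_rel R I" "(y, z) \<in> frac_rel R I"
    then obtain a b c d e f where xz: "x = (a, b)" "z = (e, f)" and c: "a \<in> carrier R"
      "b \<in> carrier R" "c \<in> carrier R" "d \<in> carrier R" "e \<in> carrier R" "f \<in> carrier R"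
      "b \<notin> I" "d \<notin> I" "f \<notin> I" and u: "a \<otimes> d \<ominus> c \<otimes> b \<in> I" and v: "c \<otimes> f \<ominus> e \<otimes> d \<in> I"
      unfolding frac_rel_def by auto
    have "d \<otimes> (a \<otimes> f \<ominus> e \<otimes> b) = f \<otimes> (a \<otimes> d \<ominus> c \<otimes> b) \<oplus> b \<otimes> (c \<otimes> f \<ominus> e \<otimes> d)"
      using c by algebra
    also have "\<dots> \<in> I" using ideal_lincomb[OF u v] c by simp
    finally have "a \<otimes> f \<ominus> e \<otimes> b \<in> I" using c by simp
    thus "(x, z) \<in> frac_rel R I" using c unfolding xz frac_rel_def by auto
  qed
qed (auto simp: frac_rel_def)

lemma frac_eq_iff:
  assumes "a \<in> carrier R" "b \<in> carrier R" "c \<in> carrier R" "d \<in> carrier R" "b \<notin> I" "d \<notin> I"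
  shows "frac R I a b = frac R I c d \<longleftrightarrow> a \<otimes> d \<ominus> c \<otimes> b \<in> I"
  using equiv_class_eq_iff[OF frac_rel_equiv, of "(a, b)" "(c, d)"] assms
  unfolding frac_def frac_rel_def by auto

lemma frac_eqI:
  assumes "a \<otimes> d = c \<otimes> b" "a \<in> carrier R" "b \<in> carrier R" "c \<in> carrier R" "d \<in> carrier R"
    "b \<notin> I" "d \<notin> I"
  shows "frac R I a b = frac R I c d"
  using assms by (simp add: frac_eq_iff r_neg minus_eq)

lemma frac_zero_iff:
  assumes "a \<in> carrier R" "b \<in> carrier R" "b \<notin> I"
  shows "frac R I a b = frac R I \<zero> \<one> \<longleftrightarrow> a \<in> I"
  using assms by (simp add: frac_eq_iff minus_eq)

lemma frac_in_carrier:
  "a \<in> carrier R \<Longrightarrow> b \<in> carrier R \<Longrightarrow> b \<notin> I \<Longrightarrow> frac R I a b \<in> frac_field_carrier R I"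
  unfolding frac_field_carrier_def by blast

lemma frac_field_carrier_cases:
  assumes "x \<in> frac_field_carrier R I"
  obtains a b where "a \<in> carrier R" "b \<in> carrier R" "b \<notin> I" "x = frac R I a b"
  using assms unfolding frac_field_carrier_def by blast

lemma frac_rep_cases:
  assumes "a \<in> carrier R" "b \<in> carrier R" "b \<notin> I"
  obtains a' b' where "frac_rep (frac R I a b) = (a', b')" "a' \<in> carrier R" "b' \<in> carrier R"
    "b' \<notin> I" "a' \<otimes> b \<ominus> a \<otimes> b' \<in> I"
proof -
  have "(a, b) \<in> frac R I a b"
    using frac_rel_equiv assms unfolding frac_def equiv_def refl_on_def by auto
  hence "frac_rep (frac R I a b) \<in> frac R I a b"
    unfolding frac_rep_def by (rule someI)
  then obtain a' b' where "frac_rep (frac R I a b) = (a', b')" "((a, b), (a', b')) \<in> frac_rel R I"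
    unfolding frac_def by (metis Image_singleton_iff surj_pair)
  moreover from this have "a' \<otimes> b \<ominus> a \<otimes> b' \<in> I"
    using sym_def[of "frac_rel R I"] frac_rel_equiv unfolding equiv_def frac_rel_def by blast
  ultimately show ?thesis using that unfolding frac_rel_def by blast
qed

lemma frac_add_eq:
  assumes "a \<in> carrier R" "b \<in> carrier R" "b \<notin> I" "c \<in> carrier R" "d \<in> carrier R" "d \<notin> I"
  shows "frac_add R I (frac R I a b) (frac R I c d) = frac R I (a \<otimes> d \<oplus> c \<otimes> b) (b \<otimes> d)"
proof -
  obtain a' b' where r1: "frac_rep (frac R I a b) = (a', b')" "a' \<in> carrier R" "b' \<in> carrier R"
    "b' \<notin> I" and u: "a' \<otimes> b \<ominus> a \<otimes> b' \<in> I" using frac_rep_cases assms by metis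
  obtain c' d' where r2: "frac_rep (frac R I c d) = (c', d')" "c' \<in> carrier R" "d' \<in> carrier R"
    "d' \<notin> I" and v: "c' \<otimes> d \<ominus> c \<otimes> d' \<in> I" using frac_rep_cases assms by metis
  have "(a' \<otimes> d' \<oplus> c' \<otimes> b') \<otimes> (b \<otimes> d) \<ominus> (a \<otimes> d \<oplus> c \<otimes> b) \<otimes> (b' \<otimes> d')
     = (d \<otimes> d') \<otimes> (a' \<otimes> b \<ominus> a \<otimes> b') \<oplus> (b \<otimes> b') \<otimes> (c' \<otimes> d \<ominus> c \<otimes> d')"
    using assms r1 r2 by algebra
  also have "\<dots> \<in> I" using ideal_lincomb[OF u v] assms r1 r2 by simp
  finally show ?thesis unfolding frac_add_def r1(1) r2(1) using assms r1 r2
    by (simp add: frac_eq_iff)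
qed

lemma frac_mul_eq:
  assumes "a \<in> carrier R" "b \<in> carrier R" "b \<notin> I" "c \<in> carrier R" "d \<in> carrier R" "d \<notin> I"
  shows "frac_mul R I (frac R I a b) (frac R I c d) = frac R I (a \<otimes> c) (b \<otimes> d)"
proof -
  obtain a' b' where r1: "frac_rep (frac R I a b) = (a', b')" "a' \<in> carrier R" "b' \<in> carrier R"
    "b' \<notin> I" and u: "a' \<otimes> b \<ominus> a \<otimes> b' \<in> I" using frac_rep_cases assms by metis
  obtain c' d' where r2: "frac_rep (frac R I c d) = (c', d')" "c' \<in> carrier R" "d' \<in> carrier R"
    "d' \<notin> I" and v: "c' \<otimes> d \<ominus> c \<otimes> d' \<in> I" using frac_rep_cases assms by metis
  have "(a' \<otimes> c') \<otimes> (b \<otimes> d) \<ominus> (a \<otimes> c) \<otimes> (b' \<otimes> d')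
     = (c' \<otimes> d) \<otimes> (a' \<otimes> b \<ominus> a \<otimes> b') \<oplus> (a \<otimes> b') \<otimes> (c' \<otimes> d \<ominus> c \<otimes> d')"
    using assms r1 r2 by algebra
  also have "\<dots> \<in> I" using ideal_lincomb[OF u v] assms r1 r2 by simp
  finally show ?thesis unfolding frac_mul_def r1(1) r2(1) using assms r1 r2
    by (simp add: frac_eq_iff)
qed

end


context primeideal
begin

lemma frac_field_abelian_group: "abelian_group (frac_field R I)"
proof (rule abelian_groupI, unfold frac_field_simps)
  note simps = frac_add_eq frac_in_carrier
  fix x y z assume "x \<in> frac_field_carrier R I" "y \<in> frac_field_carrier R I"
    "z \<in> frac_field_carrier R I"
  then obtain a b c d e f where c: "a \<in> carrier R" "b \<in> carrier R" "b \<notin> I" "x = frac R I a b"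
    "c \<in> carrier R" "d \<in> carrier R" "d \<notin> I" "y = frac R I c d"
    "e \<in> carrier R" "f \<in> carrier R" "f \<notin> I" "z = frac R I e f"
    by (auto elim!: frac_field_carrier_cases)
  show "frac_add R I x y \<in> frac_field_carrier R I" using c by (simp add: simps)
  show "frac_add R I x y = frac_add R I y x"
    using c by (simp add: simps) (rule frac_eqI; use c in \<open>simp; algebra\<close>)
  show "frac_add R I (frac_add R I x y) z = frac_add R I x (frac_add R I y z)"
    using c by (simp add: simps) (rule frac_eqI; use c in \<open>simp; algebra\<close>)
next
  note simps = frac_add_eq frac_in_carrier
  fix x assume "x \<in> frac_field_carrier R I"
  then obtain a b where c: "a \<in> carrier R" "b \<in> carrier R" "b \<notin> I" "x = frac R I a b"
    by (auto elim!: frac_field_carrier_cases)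
  show "frac_add R I (frac R I \<zero> \<one>) x = x" using c by (simp add: simps)
  have "frac_add R I (frac R I (\<ominus> a) b) x = frac R I \<zero> \<one>"
    using c by (simp add: simps) (rule frac_eqI; use c in \<open>simp; algebra\<close>)
  thus "\<exists>y\<in>frac_field_carrier R I. frac_add R I y x = frac R I \<zero> \<one>"
    using c by (intro bexI[of _ "frac R I (\<ominus> a) b"]) (simp_all add: simps)
qed (simp add: frac_in_carrier)

lemma frac_field_comm_monoid: "comm_monoid (frac_field R I)"
proof (rule comm_monoidI, unfold frac_field_simps)
  note simps = frac_mul_eq frac_in_carrier
  fix x y z assume "x \<in> frac_field_carrier R I" "y \<in> frac_field_carrier R I"
    "z \<in> frac_field_carrier R I"
  then obtain a b c d e f where c: "a \<in> carrier R" "b \<in> carrier R" "b \<notin> I" "x = frac R I a b"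
    "c \<in> carrier R" "d \<in> carrier R" "d \<notin> I" "y = frac R I c d"
    "e \<in> carrier R" "f \<in> carrier R" "f \<notin> I" "z = frac R I e f"
    by (auto elim!: frac_field_carrier_cases)
  show "frac_mul R I x y \<in> frac_field_carrier R I" using c by (simp add: simps)
  show "frac_mul R I x y = frac_mul R I y x"
    using c by (simp add: simps) (rule frac_eqI; use c in \<open>simp; algebra\<close>)
  show "frac_mul R I (frac_mul R I x y) z = frac_mul R I x (frac_mul R I y z)"
    using c by (simp add: simps) (rule frac_eqI; use c in \<open>simp; algebra\<close>)
next
  fix x assume "x \<in> frac_field_carrier R I"
  then obtain a b where c: "a \<in> carrier R" "b \<in> carrier R" "b \<notin> I" "x = frac R I a b"
    by (auto elim!: frac_field_carrier_cases)
  show "frac_mul R I (frac R I \<one> \<one>) x = x" using c by (simp add: frac_mul_eq)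
qed (simp add: frac_in_carrier)

lemma frac_field_cring: "cring (frac_field R I)"
proof (rule cringI[OF frac_field_abelian_group frac_field_comm_monoid])
  fix x y z assume "x \<in> carrier (frac_field R I)" "y \<in> carrier (frac_field R I)"
    "z \<in> carrier (frac_field R I)"
  then obtain a b c d e f where c: "a \<in> carrier R" "b \<in> carrier R" "b \<notin> I" "x = frac R I a b"
    "c \<in> carrier R" "d \<in> carrier R" "d \<notin> I" "y = frac R I c d"
    "e \<in> carrier R" "f \<in> carrier R" "f \<notin> I" "z = frac R I e f"
    by (auto simp: frac_field_simps elim!: frac_field_carrier_cases)
  show "(x \<oplus>\<^bsub>frac_field R I\<^esub> y) \<otimes>\<^bsub>frac_field R I\<^esub> z
      = x \<otimes>\<^bsub>frac_field R I\<^esub> z \<oplus>\<^bsub>frac_field R I\<^esub> y \<otimes>\<^bsub>frac_field R I\<^esub> z"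
    using c by (simp add: frac_field_simps frac_add_eq frac_mul_eq)
      (rule frac_eqI; use c in \<open>simp; algebra\<close>)
qed

lemma frac_field_domain: "domain (frac_field R I)"
proof (rule domainI[OF frac_field_cring])
  show "\<one>\<^bsub>frac_field R I\<^esub> \<noteq> \<zero>\<^bsub>frac_field R I\<^esub>"
    by (simp add: frac_field_simps frac_zero_iff)
  fix x y assume xy: "x \<otimes>\<^bsub>frac_field R I\<^esub> y = \<zero>\<^bsub>frac_field R I\<^esub>"
    "x \<in> carrier (frac_field R I)" "y \<in> carrier (frac_field R I)"
  then obtain a b c d where c: "a \<in> carrier R" "b \<in> carrier R" "b \<notin> I" "x = frac R I a b"
    "c \<in> carrier R" "d \<in> carrier R" "d \<notin> I" "y = frac R I c d"
    by (auto simp: frac_field_simps elim!: frac_field_carrier_cases)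
  from xy(1) have "a \<otimes> c \<in> I" using c by (simp add: frac_field_simps frac_mul_eq frac_zero_iff)
  thus "x = \<zero>\<^bsub>frac_field R I\<^esub> \<or> y = \<zero>\<^bsub>frac_field R I\<^esub>"
    using c by (simp add: frac_field_simps frac_zero_iff)
qed

text \<open>In K(p), (-1/1) x + x = 0; this yields additive inverses in rings of sections.\<close>
lemma frac_neg_one_mult:
  assumes "x \<in> frac_field_carrier R I"
  shows "frac_add R I (frac_mul R I (frac R I (\<ominus> \<one>) \<one>) x) x = frac R I \<zero> \<one>"
proof -
  obtain a b where c: "a \<in> carrier R" "b \<in> carrier R" "b \<notin> I" "x = frac R I a b"
    using assms frac_field_carrier_cases by blast
  show ?thesis
    using c by (simp add: frac_mul_eq frac_add_eq) (rule frac_eqI; use c in \<open>simp; algebra\<close>)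
qed

lemma frac_der_zero:
  assumes d: "is_derivation R d" and dI: "\<forall>x\<in>I. d x \<in> I"
  shows "frac_der R I d (frac R I \<zero> \<one>) = frac R I \<zero> \<one>"
proof -
  obtain a' b' where r: "frac_rep (frac R I \<zero> \<one>) = (a', b')" "a' \<in> carrier R" "b' \<in> carrier R"
    "b' \<notin> I" and u: "a' \<otimes> \<one> \<ominus> \<zero> \<otimes> b' \<in> I" using frac_rep_cases[of \<zero> \<one>] by auto
  have a: "a' \<in> I" using u r by (simp add: minus_eq)
  have "d a' \<otimes> b' \<ominus> a' \<otimes> d b' \<in> I"
    using a dI r derivation_closed[OF d] I_r_closed I_l_closed
    by (simp add: minus_eq a_inv_closed additive_subgroup.a_closed[OF additive_subgroup_axioms])
  thus ?thesis unfolding frac_der_def r(1) using r derivation_closed[OF d] by (simp add: frac_zero_iff)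
qed

lemma frac_der_const:
  assumes d: "is_derivation R d" and dI: "\<forall>x\<in>I. d x \<in> I" and a: "a \<in> carrier R"
  shows "frac_der R I d (frac R I a \<one>) = frac R I (d a) \<one>"
proof -
  obtain a' b' where r: "frac_rep (frac R I a \<one>) = (a', b')" "a' \<in> carrier R" "b' \<in> carrier R"
    "b' \<notin> I" and u: "a' \<otimes> \<one> \<ominus> a \<otimes> b' \<in> I" using frac_rep_cases[of a \<one>] a by auto
  have c: "d a \<in> carrier R" "d a' \<in> carrier R" "d b' \<in> carrier R"
    using derivation_closed[OF d] a r by auto
  have "d (a' \<otimes> \<one> \<ominus> a \<otimes> b') = d a' \<ominus> (d a \<otimes> b' \<oplus> a \<otimes> d b')"
    using derivation_minus[OF d] derivation_mult[OF d] derivation_one[OF d] a r c by simp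
  moreover have "d (a' \<otimes> \<one> \<ominus> a \<otimes> b') \<in> I" using u dI by blast
  ultimately have du: "d a' \<ominus> (d a \<otimes> b' \<oplus> a \<otimes> d b') \<in> I" by simp
  have "(d a' \<otimes> b' \<ominus> a' \<otimes> d b') \<otimes> \<one> \<ominus> d a \<otimes> (b' \<otimes> b')
      = b' \<otimes> (d a' \<ominus> (d a \<otimes> b' \<oplus> a \<otimes> d b')) \<oplus> (\<ominus> d b') \<otimes> (a' \<otimes> \<one> \<ominus> a \<otimes> b')"
    using a r c by algebra
  also have "\<dots> \<in> I" using ideal_lincomb[OF du u] r c by simp
  finally show ?thesis unfolding frac_der_def r(1) using r c a by (simp add: frac_eq_iff)
qed

end

section \<open>The Kolchin topology\<close>

lemma diff_spec_primeideal: "P \<in> diff_spec R I \<delta> \<Longrightarrow> primeideal P R"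
  unfolding diff_spec_def by blast

lemma diff_spec_closed: "P \<in> diff_spec R I \<delta> \<Longrightarrow> i \<in> I \<Longrightarrow> \<forall>x\<in>P. \<delta> i x \<in> P"
  unfolding diff_spec_def by blast

text \<open>A prime contains all products of E1 and E2 iff it contains E1 or E2; hence
  V(E1) \<union> V(E2) = V(E1 E2), so finite intersections of Kolchin opens are open.\<close>
lemma (in primeideal) products_subset_iff:
  assumes "E1 \<subseteq> carrier R" "E2 \<subseteq> carrier R"
  shows "{x \<otimes> y | x y. x \<in> E1 \<and> y \<in> E2} \<subseteq> I \<longleftrightarrow> E1 \<subseteq> I \<or> E2 \<subseteq> I"
proof
  assume prod: "{x \<otimes> y | x y. x \<in> E1 \<and> y \<in> E2} \<subseteq> I"
  show "E1 \<subseteq> I \<or> E2 \<subseteq> I"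
  proof (rule ccontr)
    assume "\<not> (E1 \<subseteq> I \<or> E2 \<subseteq> I)"
    then obtain x y where "x \<in> E1" "x \<notin> I" "y \<in> E2" "y \<notin> I" by blast
    thus False using prod assms prime_mult_iff[of x y] by blast
  qed
next
  assume "E1 \<subseteq> I \<or> E2 \<subseteq> I"
  thus "{x \<otimes> y | x y. x \<in> E1 \<and> y \<in> E2} \<subseteq> I"
    using assms I_l_closed I_r_closed by blast
qed

context cring
begin

lemma kolchin_istopology:
  "istopology (\<lambda>U. \<exists>E. E \<subseteq> carrier R \<and> U = diff_spec R I \<delta> - kolchin_V R I \<delta> E)"
  unfolding istopology_def
proof (intro conjI allI impI)
  fix S T assume "\<exists>E. E \<subseteq> carrier R \<and> S = diff_spec R I \<delta> - kolchin_V R I \<delta> E"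
    "\<exists>E. E \<subseteq> carrier R \<and> T = diff_spec R I \<delta> - kolchin_V R I \<delta> E"
  then obtain E1 E2 where E: "E1 \<subseteq> carrier R" "E2 \<subseteq> carrier R"
    "S = diff_spec R I \<delta> - kolchin_V R I \<delta> E1" "T = diff_spec R I \<delta> - kolchin_V R I \<delta> E2"
    by blast
  define E where "E = {x \<otimes> y | x y. x \<in> E1 \<and> y \<in> E2}"
  have "E \<subseteq> carrier R" using E unfolding E_def by auto
  moreover have "S \<inter> T = diff_spec R I \<delta> - kolchin_V R I \<delta> E"
  proof -
    have "E \<subseteq> P \<longleftrightarrow> E1 \<subseteq> P \<or> E2 \<subseteq> P" if "P \<in> diff_spec R I \<delta>" for P
      using primeideal.products_subset_iff[OF diff_spec_primeideal[OF that] E(1,2)]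
      unfolding E_def .
    thus ?thesis unfolding E(3,4) kolchin_V_def by blast
  qed
  ultimately show "\<exists>E. E \<subseteq> carrier R \<and> S \<inter> T = diff_spec R I \<delta> - kolchin_V R I \<delta> E" by blast
next
  fix K assume "\<forall>U\<in>K. \<exists>E. E \<subseteq> carrier R \<and> U = diff_spec R I \<delta> - kolchin_V R I \<delta> E"
  from bchoice[OF this] obtain F
    where F: "\<forall>U\<in>K. F U \<subseteq> carrier R \<and> U = diff_spec R I \<delta> - kolchin_V R I \<delta> (F U)"
    by blast
  hence "\<Union>K = (\<Union>U\<in>K. diff_spec R I \<delta> - kolchin_V R I \<delta> (F U))"
    by (metis (no_types, lifting) SUP_cong image_ident)
  also have "\<dots> = diff_spec R I \<delta> - kolchin_V R I \<delta> (\<Union>(F ` K))"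
    unfolding kolchin_V_def by auto
  finally have "\<Union>K = diff_spec R I \<delta> - kolchin_V R I \<delta> (\<Union>(F ` K))" .
  moreover have "\<Union>(F ` K) \<subseteq> carrier R" using F by blast
  ultimately show "\<exists>E. E \<subseteq> carrier R \<and> \<Union>K = diff_spec R I \<delta> - kolchin_V R I \<delta> E" by blast
qed

lemma openin_kolchin:
  "openin (kolchin_topology R I \<delta>) U \<longleftrightarrow>
     (\<exists>E. E \<subseteq> carrier R \<and> U = diff_spec R I \<delta> - kolchin_V R I \<delta> E)"
  by (simp only: kolchin_topology_def topology_inverse'[OF kolchin_istopology])

lemma basic_open:
  "e \<in> carrier R \<Longrightarrow> openin (kolchin_topology R I \<delta>) {P \<in> diff_spec R I \<delta>. e \<notin> P}"
  unfolding openin_kolchin kolchin_V_def by (intro exI[of _ "{e}"]) auto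

lemma topspace_kolchin: "topspace (kolchin_topology R I \<delta>) = diff_spec R I \<delta>"
proof
  show "topspace (kolchin_topology R I \<delta>) \<subseteq> diff_spec R I \<delta>"
    unfolding topspace_def openin_kolchin by blast
  have "{P \<in> diff_spec R I \<delta>. \<one> \<notin> P} = diff_spec R I \<delta>"
    using primeideal.one_not_in[OF diff_spec_primeideal] by blast
  thus "diff_spec R I \<delta> \<subseteq> topspace (kolchin_topology R I \<delta>)"
    using openin_subset[OF basic_open[of \<one> I \<delta>]] by simp
qed

lemma basic_open_within:
  assumes "openin (kolchin_topology R I \<delta>) W" "P \<in> W"
  obtains e where "e \<in> carrier R" "e \<notin> P" "{Q \<in> diff_spec R I \<delta>. e \<notin> Q} \<subseteq> W"
proof -
  obtain E where E: "E \<subseteq> carrier R" "W = diff_spec R I \<delta> - kolchin_V R I \<delta> E"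
    using assms(1) unfolding openin_kolchin by blast
  then obtain e where "e \<in> E" "e \<notin> P" using assms(2) unfolding kolchin_V_def by blast
  thus ?thesis using that E unfolding kolchin_V_def by blast
qed

end

lemma pointwise_cring:
  fixes S :: "('p \<Rightarrow> 'b) ring" and K :: "'p \<Rightarrow> 'b ring"
  assumes K: "\<And>P. P \<in> Sp \<Longrightarrow> cring (K P)"
    and val: "\<And>f P. f \<in> carrier S \<Longrightarrow> P \<in> Sp \<Longrightarrow> f P \<in> carrier (K P)"
    and outside: "\<And>f P. f \<in> carrier S \<Longrightarrow> P \<notin> Sp \<Longrightarrow> f P = undefined"
    and add: "\<And>f g. f \<oplus>\<^bsub>S\<^esub> g = (\<lambda>P. if P \<in> Sp then f P \<oplus>\<^bsub>K P\<^esub> g P else undefined)"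
    and mult: "\<And>f g. f \<otimes>\<^bsub>S\<^esub> g = (\<lambda>P. if P \<in> Sp then f P \<otimes>\<^bsub>K P\<^esub> g P else undefined)"
    and zero: "\<zero>\<^bsub>S\<^esub> = (\<lambda>P. if P \<in> Sp then \<zero>\<^bsub>K P\<^esub> else undefined)"
    and one: "\<one>\<^bsub>S\<^esub> = (\<lambda>P. if P \<in> Sp then \<one>\<^bsub>K P\<^esub> else undefined)"
    and add_closed: "\<And>f g. f \<in> carrier S \<Longrightarrow> g \<in> carrier S \<Longrightarrow> f \<oplus>\<^bsub>S\<^esub> g \<in> carrier S"
    and mult_closed: "\<And>f g. f \<in> carrier S \<Longrightarrow> g \<in> carrier S \<Longrightarrow> f \<otimes>\<^bsub>S\<^esub> g \<in> carrier S"
    and zero_closed: "\<zero>\<^bsub>S\<^esub> \<in> carrier S" and one_closed: "\<one>\<^bsub>S\<^esub> \<in> carrier S"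
    and neg: "\<And>f. f \<in> carrier S \<Longrightarrow>
      \<exists>g\<in>carrier S. \<forall>P\<in>Sp. g P \<oplus>\<^bsub>K P\<^esub> f P = \<zero>\<^bsub>K P\<^esub>"
  shows "cring S"
proof -
  have eqI: "u = v" if "u \<in> carrier S" "v \<in> carrier S" "\<And>P. P \<in> Sp \<Longrightarrow> u P = v P"
    for u v
    using that outside by (intro ext) metis
  have laws:
    "(f \<oplus>\<^bsub>S\<^esub> g \<oplus>\<^bsub>S\<^esub> h) P = (f \<oplus>\<^bsub>S\<^esub> (g \<oplus>\<^bsub>S\<^esub> h)) P"
    "(f \<oplus>\<^bsub>S\<^esub> g) P = (g \<oplus>\<^bsub>S\<^esub> f) P" "(\<zero>\<^bsub>S\<^esub> \<oplus>\<^bsub>S\<^esub> f) P = f P"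
    "(f \<otimes>\<^bsub>S\<^esub> g \<otimes>\<^bsub>S\<^esub> h) P = (f \<otimes>\<^bsub>S\<^esub> (g \<otimes>\<^bsub>S\<^esub> h)) P"
    "(f \<otimes>\<^bsub>S\<^esub> g) P = (g \<otimes>\<^bsub>S\<^esub> f) P" "(\<one>\<^bsub>S\<^esub> \<otimes>\<^bsub>S\<^esub> f) P = f P"
    "((f \<oplus>\<^bsub>S\<^esub> g) \<otimes>\<^bsub>S\<^esub> h) P = (f \<otimes>\<^bsub>S\<^esub> h \<oplus>\<^bsub>S\<^esub> g \<otimes>\<^bsub>S\<^esub> h) P"
    if "f \<in> carrier S" "g \<in> carrier S" "h \<in> carrier S" "P \<in> Sp" for f g h P
  proof -
    interpret KP: cring "K P" using K that(4) .
    have "f P \<in> carrier (K P)" "g P \<in> carrier (K P)" "h P \<in> carrier (K P)"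
      using val that by auto
    thus "(f \<oplus>\<^bsub>S\<^esub> g \<oplus>\<^bsub>S\<^esub> h) P = (f \<oplus>\<^bsub>S\<^esub> (g \<oplus>\<^bsub>S\<^esub> h)) P"
      "(f \<oplus>\<^bsub>S\<^esub> g) P = (g \<oplus>\<^bsub>S\<^esub> f) P" "(\<zero>\<^bsub>S\<^esub> \<oplus>\<^bsub>S\<^esub> f) P = f P"
      "(f \<otimes>\<^bsub>S\<^esub> g \<otimes>\<^bsub>S\<^esub> h) P = (f \<otimes>\<^bsub>S\<^esub> (g \<otimes>\<^bsub>S\<^esub> h)) P"
      "(f \<otimes>\<^bsub>S\<^esub> g) P = (g \<otimes>\<^bsub>S\<^esub> f) P" "(\<one>\<^bsub>S\<^esub> \<otimes>\<^bsub>S\<^esub> f) P = f P"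
      "((f \<oplus>\<^bsub>S\<^esub> g) \<otimes>\<^bsub>S\<^esub> h) P = (f \<otimes>\<^bsub>S\<^esub> h \<oplus>\<^bsub>S\<^esub> g \<otimes>\<^bsub>S\<^esub> h) P"
      using that(4) by (simp_all add: add mult zero one KP.a_ac KP.m_ac KP.l_distr KP.r_distr)
  qed
  note closed = add_closed mult_closed zero_closed one_closed
  show ?thesis
  proof (rule cringI)
    show "abelian_group S"
    proof (rule abelian_groupI)
      fix f assume f: "f \<in> carrier S"
      then obtain g where g: "g \<in> carrier S" "\<forall>P\<in>Sp. g P \<oplus>\<^bsub>K P\<^esub> f P = \<zero>\<^bsub>K P\<^esub>"
        using neg by blast
      have "g \<oplus>\<^bsub>S\<^esub> f = \<zero>\<^bsub>S\<^esub>"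
        by (rule eqI[OF add_closed[OF g(1) f] zero_closed]) (simp add: add zero g(2))
      thus "\<exists>g\<in>carrier S. g \<oplus>\<^bsub>S\<^esub> f = \<zero>\<^bsub>S\<^esub>" using g(1) by blast
    qed (assumption | rule closed eqI laws)+
    show "comm_monoid S"
      by (rule comm_monoidI; (assumption | rule closed eqI laws)+)
  qed (assumption | rule closed eqI laws)+
qed

section \<open>The differential spectrum of a ring of regular functions\<close>

locale regular_subring =
  fixes A :: "('a, 'm) ring_scheme" and I :: "'i set" and \<delta> :: "'i \<Rightarrow> 'a \<Rightarrow> 'a"
    and D :: "('a set \<Rightarrow> ('a \<times> 'a) set) set"
  assumes diff_ring: "diff_ring A I \<delta>"
    and subring: "subring D (O_ring A I \<delta>)"
    and der_closed: "\<forall>i\<in>I. \<forall>f\<in>D. O_der A I \<delta> i f \<in> D"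
    and iota_closed: "iota' A I \<delta> ` carrier A \<subseteq> D"
begin

abbreviation "Spec_A \<equiv> diff_spec A I \<delta>"
abbreviation "DR \<equiv> (O_ring A I \<delta>)\<lparr>carrier := D\<rparr>"
abbreviation "Spec_D \<equiv> diff_spec DR I (O_der A I \<delta>)"
abbreviation "iota \<equiv> iota' A I \<delta>"

abbreviation "contraction Q \<equiv> {a \<in> carrier A. iota a \<in> Q}"
abbreviation "vanishing p \<equiv> {f \<in> D. f p = frac A p \<zero>\<^bsub>A\<^esub> \<one>\<^bsub>A\<^esub>}"

lemma cring_A: "cring A"
  using diff_ring unfolding diff_ring_def by blast

lemma derivation_A: "i \<in> I \<Longrightarrow> is_derivation A (\<delta> i)"
  using diff_ring unfolding diff_ring_def by blast

lemma D_sections: "f \<in> D \<Longrightarrow> f \<in> O_sections A I \<delta> Spec_A"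
  using subringE(1)[OF subring] by (auto simp: O_ring_def)

lemma section_value: "f \<in> D \<Longrightarrow> P \<in> Spec_A \<Longrightarrow> f P \<in> frac_field_carrier A P"
  using D_sections unfolding O_sections_def by blast

lemma iota_in_D: "a \<in> carrier A \<Longrightarrow> iota a \<in> D"
  using iota_closed by blast

lemma iota_apply: "P \<in> Spec_A \<Longrightarrow> iota a P = frac A P a \<one>\<^bsub>A\<^esub>"
  by (simp add: iota'_def)

lemma O_ring_ops:
  "f \<oplus>\<^bsub>O_ring A I \<delta>\<^esub> g = (\<lambda>P. if P \<in> Spec_A then f P \<oplus>\<^bsub>frac_field A P\<^esub> g P else undefined)"
  "f \<otimes>\<^bsub>O_ring A I \<delta>\<^esub> g = (\<lambda>P. if P \<in> Spec_A then f P \<otimes>\<^bsub>frac_field A P\<^esub> g P else undefined)"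
  "\<zero>\<^bsub>O_ring A I \<delta>\<^esub> = (\<lambda>P. if P \<in> Spec_A then \<zero>\<^bsub>frac_field A P\<^esub> else undefined)"
  "\<one>\<^bsub>O_ring A I \<delta>\<^esub> = (\<lambda>P. if P \<in> Spec_A then \<one>\<^bsub>frac_field A P\<^esub> else undefined)"
  by (simp_all add: O_ring_def frac_field_simps cong: if_cong)

text \<open>D is a commutative ring; the additive inverse of f is iota'(-1) f.\<close>
lemma DR_cring: "cring DR"
proof (rule pointwise_cring[where K = "frac_field A" and Sp = Spec_A])
  fix f assume f: "f \<in> carrier DR"
  interpret A: cring A by (rule cring_A)
  have "iota (\<ominus>\<^bsub>A\<^esub> \<one>\<^bsub>A\<^esub>) \<otimes>\<^bsub>DR\<^esub> f \<in> carrier DR"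
    using subringE(6)[OF subring] iota_in_D f by simp
  moreover have "\<forall>P\<in>Spec_A. (iota (\<ominus>\<^bsub>A\<^esub> \<one>\<^bsub>A\<^esub>) \<otimes>\<^bsub>DR\<^esub> f) P \<oplus>\<^bsub>frac_field A P\<^esub> f P
      = \<zero>\<^bsub>frac_field A P\<^esub>"
    using primeideal.frac_neg_one_mult[OF diff_spec_primeideal[of _ A I \<delta>] section_value] f
    by (simp add: O_ring_ops iota_apply frac_field_simps)
  ultimately show "\<exists>g\<in>carrier DR. \<forall>P\<in>Spec_A. g P \<oplus>\<^bsub>frac_field A P\<^esub> f P = \<zero>\<^bsub>frac_field A P\<^esub>"
    by blast
qed (use primeideal.frac_field_cring[OF diff_spec_primeideal] section_value D_sections
      subringE[OF subring] in \<open>auto simp: O_ring_ops frac_field_simps O_sections_def\<close>)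

lemma iota_hom: "ring_hom_ring A DR iota"
proof -
  interpret A: cring A by (rule cring_A)
  have "iota \<in> ring_hom A DR"
  proof (rule ring_hom_memI)
    fix x y assume x: "x \<in> carrier A" and y: "y \<in> carrier A"
    show "iota (x \<otimes>\<^bsub>A\<^esub> y) = iota x \<otimes>\<^bsub>DR\<^esub> iota y"
    proof (rule ext)
      fix P show "iota (x \<otimes>\<^bsub>A\<^esub> y) P = (iota x \<otimes>\<^bsub>DR\<^esub> iota y) P"
        using x y primeideal.frac_mul_eq[OF diff_spec_primeideal, of P A I \<delta> x "\<one>\<^bsub>A\<^esub>" y "\<one>\<^bsub>A\<^esub>"]
          primeideal.one_not_in[OF diff_spec_primeideal, of P A I \<delta>]
        by (simp add: O_ring_def iota'_def)
    qed
    show "iota (x \<oplus>\<^bsub>A\<^esub> y) = iota x \<oplus>\<^bsub>DR\<^esub> iota y"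
    proof (rule ext)
      fix P show "iota (x \<oplus>\<^bsub>A\<^esub> y) P = (iota x \<oplus>\<^bsub>DR\<^esub> iota y) P"
        using x y primeideal.frac_add_eq[OF diff_spec_primeideal, of P A I \<delta> x "\<one>\<^bsub>A\<^esub>" y "\<one>\<^bsub>A\<^esub>"]
          primeideal.one_not_in[OF diff_spec_primeideal, of P A I \<delta>]
        by (simp add: O_ring_def iota'_def)
    qed
  next
    show "iota x \<in> carrier DR" if "x \<in> carrier A" for x using iota_in_D that by simp
  qed (simp add: O_ring_def iota'_def)
  thus ?thesis
    using ring_hom_ringI2[OF A.ring_axioms cring.axioms(1)[OF DR_cring]] by blast
qed

lemma O_der_iota:
  assumes "a \<in> carrier A" "i \<in> I"
  shows "O_der A I \<delta> i (iota a) = iota (\<delta> i a)"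
proof (rule ext)
  fix P show "O_der A I \<delta> i (iota a) P = iota (\<delta> i a) P"
    using assms primeideal.frac_der_const[OF diff_spec_primeideal[of P A I \<delta>] derivation_A]
      diff_spec_closed[of P A I \<delta>]
    by (simp add: O_der_def iota'_def)
qed

lemma contraction_in_spec:
  assumes Q: "Q \<in> Spec_D" shows "contraction Q \<in> Spec_A"
proof -
  have "primeideal (contraction Q) A"
    using ring_hom_ring.primeideal_vimage[OF iota_hom cring_A diff_spec_primeideal[OF Q]] .
  moreover have "\<delta> i x \<in> contraction Q" if "i \<in> I" "x \<in> contraction Q" for i x
    using that diff_spec_closed[OF Q that(1)] O_der_iota[of x i]
      cring.derivation_closed[OF cring_A derivation_A] by auto
  ultimately show ?thesis unfolding diff_spec_def by blast
qed

lemma evaluation_hom: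
  assumes p: "p \<in> Spec_A" shows "ring_hom_ring DR (frac_field A p) (\<lambda>f. f p)"
proof -
  interpret p: primeideal p A by (rule diff_spec_primeideal[OF p])
  have "(\<lambda>f. f p) \<in> ring_hom DR (frac_field A p)"
    by (rule ring_hom_memI) (use p section_value in \<open>auto simp: O_ring_ops frac_field_simps\<close>)
  thus ?thesis
    using ring_hom_ringI2[OF cring.axioms(1)[OF DR_cring] cring.axioms(1)[OF p.frac_field_cring]]
    by blast
qed

lemma vanishing_in_spec:
  assumes p: "p \<in> Spec_A" shows "vanishing p \<in> Spec_D"
proof -
  interpret p: primeideal p A by (rule diff_spec_primeideal[OF p])
  interpret K: domain "frac_field A p" by (rule p.frac_field_domain)
  interpret D: cring DR by (rule DR_cring)
  interpret ev: ring_hom_ring DR "frac_field A p" "\<lambda>f. f p" by (rule evaluation_hom[OF p])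
  have ker: "a_kernel DR (frac_field A p) (\<lambda>f. f p) = vanishing p"
    unfolding a_kernel_def' by (simp add: frac_field_simps)
  have "primeideal (vanishing p) DR"
  proof (rule primeidealI)
    show "ideal (vanishing p) DR" using ev.kernel_is_ideal ker by simp
    have "\<one>\<^bsub>DR\<^esub> \<notin> vanishing p"
      using p p.frac_zero_iff[of "\<one>\<^bsub>A\<^esub>" "\<one>\<^bsub>A\<^esub>"] by (simp add: O_ring_def)
    thus "carrier DR \<noteq> vanishing p" using D.one_closed by blast
  next
    fix f g assume f: "f \<in> carrier DR" and g: "g \<in> carrier DR" and "f \<otimes>\<^bsub>DR\<^esub> g \<in> vanishing p"
    hence "f p \<otimes>\<^bsub>frac_field A p\<^esub> g p = \<zero>\<^bsub>frac_field A p\<^esub>"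
      using ev.hom_mult by (simp add: frac_field_simps)
    moreover have "f p \<in> carrier (frac_field A p)" "g p \<in> carrier (frac_field A p)"
      using f g section_value[OF _ p] by (simp_all add: frac_field_simps)
    ultimately have "f p = \<zero>\<^bsub>frac_field A p\<^esub> \<or> g p = \<zero>\<^bsub>frac_field A p\<^esub>"
      using K.integral by blast
    thus "f \<in> vanishing p \<or> g \<in> vanishing p"
      using f g by (auto simp: frac_field_simps)
  qed (rule DR_cring)
  moreover have "O_der A I \<delta> i f \<in> vanishing p" if "i \<in> I" "f \<in> vanishing p" for i f
    using that der_closed p p.frac_der_zero[OF derivation_A diff_spec_closed[OF p]]
    by (auto simp: O_der_def)
  ultimately show ?thesis unfolding diff_spec_def by blast
qed

lemma contraction_vanishing:
  assumes p: "p \<in> Spec_A" shows "contraction (vanishing p) = p"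
proof -
  interpret p: primeideal p A by (rule diff_spec_primeideal[OF p])
  show ?thesis
    using iota_in_D p.frac_zero_iff[of _ "\<one>\<^bsub>A\<^esub>"] p.a_subset by (auto simp: iota_apply[OF p])
qed

lemma local_fraction:
  assumes f: "f \<in> D" and p: "p \<in> Spec_A"
  obtains a b e where "a \<in> carrier A" "b \<in> carrier A" "e \<in> carrier A" "e \<notin> p"
    "\<And>Q. Q \<in> Spec_A \<Longrightarrow> e \<notin> Q \<Longrightarrow> b \<notin> Q \<and> f Q = frac A Q a b"
proof -
  obtain W a b where W: "openin (kolchin_topology A I \<delta>) W" "p \<in> W" "a \<in> carrier A"
    "b \<in> carrier A" "\<forall>Q\<in>W. b \<notin> Q \<and> f Q = frac A Q a b"
    using D_sections[OF f] p unfolding O_sections_def regular_at_def by blast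
  obtain e where "e \<in> carrier A" "e \<notin> p" "{Q \<in> Spec_A. e \<notin> Q} \<subseteq> W"
    using cring.basic_open_within[OF cring_A W(1,2)] by blast
  thus ?thesis using that W(3-5) by blast
qed


text \<open>If f = a/b on D(e), then iota'(e b) f = iota'(e a) on all of X: on D(e) both sides
  are e a / 1, and off D(e) both vanish since e does.\<close>
lemma clear_denominators:
  assumes f: "f \<in> D" and carr: "a \<in> carrier A" "b \<in> carrier A" "e \<in> carrier A"
    and loc: "\<And>Q. Q \<in> Spec_A \<Longrightarrow> e \<notin> Q \<Longrightarrow> b \<notin> Q \<and> f Q = frac A Q a b"
  shows "iota (e \<otimes>\<^bsub>A\<^esub> b) \<otimes>\<^bsub>DR\<^esub> f = iota (e \<otimes>\<^bsub>A\<^esub> a)"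
proof (rule ext)
  fix P
  show "(iota (e \<otimes>\<^bsub>A\<^esub> b) \<otimes>\<^bsub>DR\<^esub> f) P = iota (e \<otimes>\<^bsub>A\<^esub> a) P"
  proof (cases "P \<in> Spec_A")
    case P: True
    interpret A: cring A by (rule cring_A)
    interpret P: primeideal P A by (rule diff_spec_primeideal[OF P])
    obtain c d where cd: "c \<in> carrier A" "d \<in> carrier A" "d \<notin> P" "f P = frac A P c d"
      using P.frac_field_carrier_cases[OF section_value[OF f P]] by blast
    have "e \<otimes>\<^bsub>A\<^esub> (c \<otimes>\<^bsub>A\<^esub> b \<ominus>\<^bsub>A\<^esub> a \<otimes>\<^bsub>A\<^esub> d) \<in> P"
    proof (cases "e \<in> P")
      case True thus ?thesis using carr cd P.I_r_closed by simp
    next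
      case False
      hence "frac A P c d = frac A P a b" "b \<notin> P" using loc[OF P] cd by auto
      hence "c \<otimes>\<^bsub>A\<^esub> b \<ominus>\<^bsub>A\<^esub> a \<otimes>\<^bsub>A\<^esub> d \<in> P" using carr cd P.frac_eq_iff by simp
      thus ?thesis using carr cd P.I_l_closed by simp
    qed
    moreover have "(e \<otimes>\<^bsub>A\<^esub> b \<otimes>\<^bsub>A\<^esub> c) \<otimes>\<^bsub>A\<^esub> \<one>\<^bsub>A\<^esub> \<ominus>\<^bsub>A\<^esub> (e \<otimes>\<^bsub>A\<^esub> a) \<otimes>\<^bsub>A\<^esub> (\<one>\<^bsub>A\<^esub> \<otimes>\<^bsub>A\<^esub> d)
        = e \<otimes>\<^bsub>A\<^esub> (c \<otimes>\<^bsub>A\<^esub> b \<ominus>\<^bsub>A\<^esub> a \<otimes>\<^bsub>A\<^esub> d)"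
      using carr cd by algebra
    ultimately have "frac A P (e \<otimes>\<^bsub>A\<^esub> b \<otimes>\<^bsub>A\<^esub> c) (\<one>\<^bsub>A\<^esub> \<otimes>\<^bsub>A\<^esub> d) = frac A P (e \<otimes>\<^bsub>A\<^esub> a) \<one>\<^bsub>A\<^esub>"
      using carr cd by (simp add: P.frac_eq_iff)
    thus ?thesis using P carr cd by (simp add: O_ring_def iota_apply P.frac_mul_eq)
  qed (simp add: O_ring_def iota'_def)
qed

lemma mem_iff_vanishes_at_contraction:
  assumes Q: "Q \<in> Spec_D" and f: "f \<in> D"
  shows "f \<in> Q \<longleftrightarrow> f (contraction Q) = frac A (contraction Q) \<zero>\<^bsub>A\<^esub> \<one>\<^bsub>A\<^esub>"
proof -
  define p where "p = contraction Q"
  have p: "p \<in> Spec_A" unfolding p_def by (rule contraction_in_spec[OF Q])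
  interpret A: cring A by (rule cring_A)
  interpret p: primeideal p A by (rule diff_spec_primeideal[OF p])
  interpret Q: primeideal Q DR by (rule diff_spec_primeideal[OF Q])
  obtain a b e where carr: "a \<in> carrier A" "b \<in> carrier A" "e \<in> carrier A" "e \<notin> p"
    and loc: "\<And>Q. Q \<in> Spec_A \<Longrightarrow> e \<notin> Q \<Longrightarrow> b \<notin> Q \<and> f Q = frac A Q a b"
    using local_fraction[OF f p] by blast
  have fp: "b \<notin> p" "f p = frac A p a b" using loc[OF p carr(4)] by auto
  have iota_Q: "iota x \<in> Q \<longleftrightarrow> x \<in> p" if "x \<in> carrier A" for x
    using that unfolding p_def by simp
  have eb: "iota (e \<otimes>\<^bsub>A\<^esub> b) \<in> carrier DR" "iota (e \<otimes>\<^bsub>A\<^esub> b) \<notin> Q"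
    using carr fp iota_in_D iota_Q[of "e \<otimes>\<^bsub>A\<^esub> b"] by simp_all
  have "f \<in> Q \<longleftrightarrow> iota (e \<otimes>\<^bsub>A\<^esub> b) \<otimes>\<^bsub>DR\<^esub> f \<in> Q"
    using Q.prime_mult_iff[OF eb(1), of f] eb(2) f by simp
  also have "\<dots> \<longleftrightarrow> e \<otimes>\<^bsub>A\<^esub> a \<in> p"
    using clear_denominators[OF f carr(1-3) loc] iota_Q carr by simp
  also have "\<dots> \<longleftrightarrow> f p = frac A p \<zero>\<^bsub>A\<^esub> \<one>\<^bsub>A\<^esub>"
    using carr fp p.frac_zero_iff by simp
  finally show ?thesis unfolding p_def .
qed

lemma vanishing_contraction:
  assumes Q: "Q \<in> Spec_D" shows "vanishing (contraction Q) = Q"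
proof -
  interpret Q: primeideal Q DR by (rule diff_spec_primeideal[OF Q])
  show ?thesis using Q.a_subset mem_iff_vanishes_at_contraction[OF Q] by auto
qed

lemma contraction_continuous:
  "continuous_map (kolchin_topology DR I (O_der A I \<delta>)) (kolchin_topology A I \<delta>) contraction"
proof (unfold continuous_map, intro conjI allI impI)
  show "contraction ` topspace (kolchin_topology DR I (O_der A I \<delta>))
      \<subseteq> topspace (kolchin_topology A I \<delta>)"
    using contraction_in_spec
    by (auto simp: cring.topspace_kolchin[OF DR_cring] cring.topspace_kolchin[OF cring_A])
next
  fix U assume "openin (kolchin_topology A I \<delta>) U"
  then obtain E where E: "E \<subseteq> carrier A" "U = Spec_A - kolchin_V A I \<delta> E"
    by (auto simp: cring.openin_kolchin[OF cring_A])
  have "{Q \<in> topspace (kolchin_topology DR I (O_der A I \<delta>)). contraction Q \<in> U}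
      = Spec_D - kolchin_V DR I (O_der A I \<delta>) (iota ` E)"
    using E contraction_in_spec by (auto simp: cring.topspace_kolchin[OF DR_cring] kolchin_V_def)
  moreover have "iota ` E \<subseteq> carrier DR" using E iota_in_D by auto
  ultimately show "openin (kolchin_topology DR I (O_der A I \<delta>))
      {Q \<in> topspace (kolchin_topology DR I (O_der A I \<delta>)). contraction Q \<in> U}"
    by (auto simp: cring.openin_kolchin[OF DR_cring])
qed

text \<open>The non-vanishing locus of f \<in> D is open: near p it contains D(e a) when f = a/b on D(e).\<close>
lemma nonvanishing_open:
  assumes f: "f \<in> D"
  shows "openin (kolchin_topology A I \<delta>) {p \<in> Spec_A. f p \<noteq> frac A p \<zero>\<^bsub>A\<^esub> \<one>\<^bsub>A\<^esub>}"
proof (subst openin_subopen, intro ballI)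
  fix p assume "p \<in> {p \<in> Spec_A. f p \<noteq> frac A p \<zero>\<^bsub>A\<^esub> \<one>\<^bsub>A\<^esub>}"
  hence p: "p \<in> Spec_A" and fp: "f p \<noteq> frac A p \<zero>\<^bsub>A\<^esub> \<one>\<^bsub>A\<^esub>" by auto
  interpret A: cring A by (rule cring_A)
  obtain a b e where carr: "a \<in> carrier A" "b \<in> carrier A" "e \<in> carrier A" "e \<notin> p"
    and loc: "\<And>Q. Q \<in> Spec_A \<Longrightarrow> e \<notin> Q \<Longrightarrow> b \<notin> Q \<and> f Q = frac A Q a b"
    using local_fraction[OF f p] by blast
  have nonzero_iff: "f Q \<noteq> frac A Q \<zero>\<^bsub>A\<^esub> \<one>\<^bsub>A\<^esub> \<longleftrightarrow> a \<notin> Q" if "Q \<in> Spec_A" "e \<notin> Q" for Q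
    using loc[OF that] carr primeideal.frac_zero_iff[OF diff_spec_primeideal[OF that(1)]] by simp
  let ?T = "{Q \<in> Spec_A. e \<otimes>\<^bsub>A\<^esub> a \<notin> Q}"
  have "openin (kolchin_topology A I \<delta>) ?T" using carr by (simp add: A.basic_open)
  moreover have "p \<in> ?T" using p carr fp nonzero_iff[OF p]
    primeideal.prime_mult_iff[OF diff_spec_primeideal[OF p]] by simp
  moreover have "?T \<subseteq> {p \<in> Spec_A. f p \<noteq> frac A p \<zero>\<^bsub>A\<^esub> \<one>\<^bsub>A\<^esub>}"
  proof
    fix Q assume "Q \<in> ?T"
    hence "Q \<in> Spec_A" "e \<notin> Q" "a \<notin> Q"
      using carr primeideal.prime_mult_iff[OF diff_spec_primeideal[of Q A I \<delta>]] by auto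
    thus "Q \<in> {p \<in> Spec_A. f p \<noteq> frac A p \<zero>\<^bsub>A\<^esub> \<one>\<^bsub>A\<^esub>}" using nonzero_iff by simp
  qed
  ultimately show "\<exists>T. openin (kolchin_topology A I \<delta>) T \<and> p \<in> T \<and>
      T \<subseteq> {p \<in> Spec_A. f p \<noteq> frac A p \<zero>\<^bsub>A\<^esub> \<one>\<^bsub>A\<^esub>}" by blast
qed

lemma vanishing_continuous:
  "continuous_map (kolchin_topology A I \<delta>) (kolchin_topology DR I (O_der A I \<delta>)) vanishing"
proof (unfold continuous_map, intro conjI allI impI)
  show "vanishing ` topspace (kolchin_topology A I \<delta>)
      \<subseteq> topspace (kolchin_topology DR I (O_der A I \<delta>))"
    using vanishing_in_spec
    by (auto simp: cring.topspace_kolchin[OF DR_cring] cring.topspace_kolchin[OF cring_A])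
next
  fix U assume "openin (kolchin_topology DR I (O_der A I \<delta>)) U"
  then obtain F where F: "F \<subseteq> D" "U = Spec_D - kolchin_V DR I (O_der A I \<delta>) F"
    by (auto simp: cring.openin_kolchin[OF DR_cring])
  have "{p \<in> topspace (kolchin_topology A I \<delta>). vanishing p \<in> U}
      = (\<Union>f\<in>F. {p \<in> Spec_A. f p \<noteq> frac A p \<zero>\<^bsub>A\<^esub> \<one>\<^bsub>A\<^esub>})"
    using F vanishing_in_spec by (auto simp: cring.topspace_kolchin[OF cring_A] kolchin_V_def)
  thus "openin (kolchin_topology A I \<delta>) {p \<in> topspace (kolchin_topology A I \<delta>). vanishing p \<in> U}"
    using nonvanishing_open F by (auto intro!: openin_Union)
qed

end

theorem theorem2p6:
  fixes A :: "('a, 'm) ring_scheme" and I :: "'i set" and \<delta> :: "'i \<Rightarrow> 'a \<Rightarrow> 'a"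
    and D :: "('a set \<Rightarrow> ('a \<times> 'a) set) set"
  assumes "diff_ring A I \<delta>"
    and "subring D (O_ring A I \<delta>)"
    and "\<forall>i\<in>I. \<forall>f\<in>D. O_der A I \<delta> i f \<in> D"
    and "iota' A I \<delta> ` carrier A \<subseteq> D"
  shows "homeomorphic_map
           (kolchin_topology ((O_ring A I \<delta>)\<lparr>carrier := D\<rparr>) I (O_der A I \<delta>))
           (kolchin_topology A I \<delta>)
           (\<lambda>Q. {a \<in> carrier A. iota' A I \<delta> a \<in> Q})"
proof -
  interpret regular_subring A I \<delta> D using assms by (rule regular_subring.intro)
  have "homeomorphic_maps (kolchin_topology DR I (O_der A I \<delta>)) (kolchin_topology A I \<delta>)
      contraction vanishing"
    unfolding homeomorphic_maps_def
    using contraction_continuous vanishing_continuous vanishing_contraction contraction_vanishing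
    by (simp add: cring.topspace_kolchin[OF DR_cring] cring.topspace_kolchin[OF cring_A])
  thus ?thesis unfolding homeomorphic_map_maps by blast
qed
end
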